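(* In the setting of the context, suppose moreover that $B_{0,w}\le 2^{-l}\binom{n}{w}$ for all $w$ with $d_0\le w\le n$ (binomial weight distribution). Then $$P(E=0)\le 2^{-l}(1+\beta)^n,\qquad\text{equivalently}\qquad \log_2 P(E=0)\le n\bigl\{R-\bigl(1-\log_2(1+\beta)\bigr)\bigr\}\ \text{ when } l=n-k,\ R=k/n.$$
   Context: All arithmetic is over $\mathrm{GF}(2)$. $G_0$ is a fixed $n\times l$ binary matrix, $G_1$ a fixed $n\times k$ binary matrix, $\mathbf m\in\{0,1\}^k$ fixed. $\mathcal C_0^{\perp}=\{\mathbf x\in\{0,1\}^n: G_0^T\mathbf x=\mathbf 0\}$; $B_{0,w}$ is the number of vectors of Hamming weight $w$ in $\mathcal C_0^\perp$, and $d_0$ is the minimum Hamming weight of a nonzero vector of $\mathcal C_0^\perp$. Defect model: each of the $n$ memory cells is independently defective with probability $\beta\in(0,1)$; a defective cell is stuck at $0$ or at $1$, each with probability $1/2$, independently. Let $\mathcal U$ be the set of defect positions and $\mathbf s^{\mathcal U}$ the vector of stuck-at values. For a matrix $M$ (resp. vector $\mathbf v$) with rows indexed by $\{1,\dots,n\}$, $M^{\mathcal U}$ (resp. $\mathbf v^{\mathcal U}$) denotes the rows indexed by $\mathcal U$. Encoding: with $\mathbf b^{\mathcal U}=(G_1\mathbf m)^{\mathcal U}+\mathbf s^{\mathcal U}$, look for $\mathbf d\in\{0,1\}^l$ with $G_0^{\mathcal U}\mathbf d=\mathbf b^{\mathcal U}$; $E=1$ if such $\mathbf d$ exists and $E=0$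 (encoding failure) otherwise. (For the binary defect channel alone, the total redundancy is $l=n-k$.) *)

theory Defs
  imports Complex_Main "HOL-Library.Z2"
begin

text \<open>Vectors over GF(2) are functions nat => bit, relevant on indices below the
length; matrices are functions nat => nat => bit (row index, column index).\<close>

definition mat_vec :: "(nat \<Rightarrow> nat \<Rightarrow> bit) \<Rightarrow> nat \<Rightarrow> (nat \<Rightarrow> bit) \<Rightarrow> nat \<Rightarrow> bit" where
  "mat_vec M c v i = (\<Sum>j<c. M i j * v j)"

definition bvecs :: "nat \<Rightarrow> (nat \<Rightarrow> bit) set" where
  "bvecs n = {x. \<forall>i. n \<le> i \<longrightarrow> x i = 0}"

definition hweight :: "nat \<Rightarrow> (nat \<Rightarrow> bit) \<Rightarrow> nat" where
  "hweight n x = card {i. i < n \<and> x i \<noteq> 0}"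

definition dual_code :: "(nat \<Rightarrow> nat \<Rightarrow> bit) \<Rightarrow> nat \<Rightarrow> nat \<Rightarrow> (nat \<Rightarrow> bit) set" where
  "dual_code G0 n l = {x \<in> bvecs n. \<forall>j<l. (\<Sum>i<n. G0 i j * x i) = 0}"

definition weight_enum :: "(nat \<Rightarrow> nat \<Rightarrow> bit) \<Rightarrow> nat \<Rightarrow> nat \<Rightarrow> nat \<Rightarrow> nat" where
  "weight_enum G0 n l w = card {x \<in> dual_code G0 n l. hweight n x = w}"

text \<open>Minimum distance d_0; by convention n+1 (i.e. "infinity") if the dual code is trivial.\<close>
definition min_dist :: "(nat \<Rightarrow> nat \<Rightarrow> bit) \<Rightarrow> nat \<Rightarrow> nat \<Rightarrow> nat" where
  "min_dist G0 n l =
     (if \<exists>x\<in>dual_code G0 n l. x \<noteq> (\<lambda>_. 0)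
      then Min {hweight n x | x. x \<in> dual_code G0 n l \<and> x \<noteq> (\<lambda>_. 0)}
      else n + 1)"

text \<open>Defect configurations: c i = None (cell i not defective), c i = Some s (stuck at s).
The defect set U is {i. c i \<noteq> None}, the stuck-at values are the Some-values.\<close>
definition defect_configs :: "nat \<Rightarrow> (nat \<Rightarrow> bit option) set" where
  "defect_configs n = {c. \<forall>i. n \<le> i \<longrightarrow> c i = None}"

definition config_prob :: "real \<Rightarrow> nat \<Rightarrow> (nat \<Rightarrow> bit option) \<Rightarrow> real" where
  "config_prob \<beta> n c = (\<Prod>i<n. (case c i of None \<Rightarrow> 1 - \<beta> | Some _ \<Rightarrow> \<beta> / 2))"

text \<open>Encoding success E = 1: exists d in GF(2)^l with G_0^U d = (G_1 m)^U + s^U.\<close>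
definition encodable ::
  "(nat \<Rightarrow> nat \<Rightarrow> bit) \<Rightarrow> (nat \<Rightarrow> nat \<Rightarrow> bit) \<Rightarrow> nat \<Rightarrow> nat \<Rightarrow> nat \<Rightarrow> (nat \<Rightarrow> bit)
     \<Rightarrow> (nat \<Rightarrow> bit option) \<Rightarrow> bool" where
  "encodable G0 G1 n l k m c =
     (\<exists>d \<in> bvecs l. \<forall>i<n. \<forall>s. c i = Some s \<longrightarrow>
        mat_vec G0 l d i = mat_vec G1 k m i + s)"

definition fail_prob ::
  "real \<Rightarrow> (nat \<Rightarrow> nat \<Rightarrow> bit) \<Rightarrow> (nat \<Rightarrow> nat \<Rightarrow> bit) \<Rightarrow> nat \<Rightarrow> nat \<Rightarrow> nat \<Rightarrow> (nat \<Rightarrow> bit) \<Rightarrow> real" where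
  "fail_prob \<beta> G0 G1 n l k m =
     (\<Sum>c\<in>{c \<in> defect_configs n. \<not> encodable G0 G1 n l k m c}. config_prob \<beta> n c)"

end

theory Submission
  imports Defs "HOL-Library.FuncSet"
begin

text \<open>Encoding fails exactly when the system G0^U d = b^U is inconsistent, and over a field
  that happens only if some y supported on U annihilates the columns of G0 while y . b = 1.
  Padded with zeros, y is a nonzero dual codeword whose support lies in the defect set, an event
  of probability beta^wt(y). The union bound over nonzero dual codewords gives
  P(E = 0) <= sum_w B_w beta^w, and the binomial weight distribution turns this into
  2^-l sum_w (n choose w) beta^w = 2^-l (1 + beta)^n.\<close>

definition padded_funs :: "nat \<Rightarrow> (nat \<Rightarrow> 'a set) \<Rightarrow> 'a \<Rightarrow> (nat \<Rightarrow> 'a) set" where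
  "padded_funs n S z = {c. (\<forall>i<n. c i \<in> S i) \<and> (\<forall>i\<ge>n. c i = z)}"

lemma padded_funs_eq_image_PiE:
  "padded_funs n S z = (\<lambda>g i. if i < n then g i else z) ` (\<Pi>\<^sub>E i\<in>{..<n}. S i)"
proof (intro equalityI subsetI)
  fix c assume c: "c \<in> padded_funs n S z"
  then have "c = (\<lambda>i. if i < n then restrict c {..<n} i else z)"
    unfolding padded_funs_def by (simp add: fun_eq_iff)
  moreover have "restrict c {..<n} \<in> (\<Pi>\<^sub>E i\<in>{..<n}. S i)"
    using c unfolding padded_funs_def by simp
  ultimately show "c \<in> (\<lambda>g i. if i < n then g i else z) ` (\<Pi>\<^sub>E i\<in>{..<n}. S i)"
    by blast
qed (unfold padded_funs_def, force simp: PiE_iff)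

lemma inj_on_pad_PiE: "inj_on (\<lambda>g i. if i < n then g i else z) (\<Pi>\<^sub>E i\<in>{..<n}. S i)"
proof (rule inj_onI)
  fix g h assume g: "g \<in> (\<Pi>\<^sub>E i\<in>{..<n}. S i)" and h: "h \<in> (\<Pi>\<^sub>E i\<in>{..<n}. S i)"
    and eq: "(\<lambda>i. if i < n then g i else z) = (\<lambda>i. if i < n then h i else z)"
  show "g = h"
  proof (rule PiE_ext[OF g h])
    fix i assume "i \<in> {..<n}"
    then show "g i = h i" using fun_cong[OF eq, of i] by simp
  qed
qed

lemma finite_padded_funs: "(\<And>i. i < n \<Longrightarrow> finite (S i)) \<Longrightarrow> finite (padded_funs n S z)"
  unfolding padded_funs_eq_image_PiE by (intro finite_imageI finite_PiE) simp_all

lemma sum_prod_padded_funs: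
  fixes f :: "nat \<Rightarrow> 'a \<Rightarrow> 'b::comm_semiring_1"
  assumes "\<And>i. i < n \<Longrightarrow> finite (S i)"
  shows "(\<Sum>c\<in>padded_funs n S z. \<Prod>i<n. f i (c i)) = (\<Prod>i<n. \<Sum>a\<in>S i. f i a)"
proof -
  have "(\<Sum>c\<in>padded_funs n S z. \<Prod>i<n. f i (c i))
          = (\<Sum>g\<in>(\<Pi>\<^sub>E i\<in>{..<n}. S i). \<Prod>i<n. f i (g i))"
    unfolding padded_funs_eq_image_PiE by (subst sum.reindex[OF inj_on_pad_PiE]) simp
  also have "\<dots> = (\<Prod>i<n. \<Sum>a\<in>S i. f i a)"
    by (rule prod_sum_PiE[symmetric]) (simp_all add: assms)
  finally show ?thesis .
qed

lemma solution_after_pivot_elimination: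
  fixes A :: "'i \<Rightarrow> nat \<Rightarrow> 'a::field"
  assumes pivot: "p \<in> U" "A p l \<noteq> 0"
    and sol: "\<forall>i\<in>U - {p}. (\<Sum>j<l. (A i j - A i l / A p l * A p j) * d j) = b i - A i l / A p l * b p"
  shows "\<forall>i\<in>U. (\<Sum>j<Suc l. A i j * (d(l := (b p - (\<Sum>j<l. A p j * d j)) / A p l)) j) = b i"
proof
  fix i assume i: "i \<in> U"
  define r where "r = (\<Sum>j<l. A p j * d j)"
  define c where "c = A i l / A p l"
  have "(\<Sum>j<Suc l. A i j * (d(l := (b p - r) / A p l)) j)
          = (\<Sum>j<l. A i j * d j) + A i l * ((b p - r) / A p l)"
    by (simp add: sum.lessThan_Suc)
  also have "(\<Sum>j<l. A i j * d j) = (\<Sum>j<l. (A i j - c * A p j) * d j) + c * r"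
    by (simp add: r_def left_diff_distrib sum_subtractf sum_distrib_left mult.assoc)
  also have "A i l * ((b p - r) / A p l) = c * b p - c * r"
    by (simp add: c_def right_diff_distrib diff_divide_distrib)
  finally have expand: "(\<Sum>j<Suc l. A i j * (d(l := (b p - r) / A p l)) j)
      = (\<Sum>j<l. (A i j - c * A p j) * d j) + c * b p"
    by simp
  show "(\<Sum>j<Suc l. A i j * (d(l := (b p - r) / A p l)) j) = b i"
  proof (cases "i = p")
    case True
    then show ?thesis using expand pivot by (simp add: c_def)
  next
    case False
    then show ?thesis using expand sol i by (simp add: c_def)
  qed
qed

lemma certificate_after_pivot_elimination:
  fixes A :: "'i \<Rightarrow> nat \<Rightarrow> 'a::field"
  assumes "finite U" and pivot: "p \<in> U" "A p l \<noteq> 0"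
    and cert: "\<forall>j<l. (\<Sum>i\<in>U - {p}. y i * (A i j - A i l / A p l * A p j)) = 0"
      "(\<Sum>i\<in>U - {p}. y i * (b i - A i l / A p l * b p)) = 1"
  defines "y' \<equiv> y(p := - (\<Sum>i\<in>U - {p}. y i * A i l) / A p l)"
  shows "(\<forall>j<Suc l. (\<Sum>i\<in>U. y' i * A i j) = 0) \<and> (\<Sum>i\<in>U. y' i * b i) = 1"
proof -
  define s where "s = (\<Sum>i\<in>U - {p}. y i * A i l)"
  have split: "(\<Sum>i\<in>U. y' i * f i) = - s / A p l * f p + (\<Sum>i\<in>U - {p}. y i * f i)" for f
    using \<open>finite U\<close> pivot by (simp add: sum.remove y'_def s_def)
  have eliminated: "(\<Sum>i\<in>U - {p}. y i * (f i - A i l / A p l * f p))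
                     = (\<Sum>i\<in>U - {p}. y i * f i) - s / A p l * f p" for f
  proof -
    have "(\<Sum>i\<in>U - {p}. y i * (A i l / A p l * f p)) = s / A p l * f p"
      unfolding s_def by (simp add: sum_distrib_right sum_divide_distrib mult.assoc)
    then show ?thesis by (simp add: right_diff_distrib sum_subtractf)
  qed
  have "(\<Sum>i\<in>U. y' i * A i j) = 0" if "j < Suc l" for j
  proof (cases "j = l")
    case True
    then show ?thesis using pivot by (simp add: split s_def)
  next
    case False
    then show ?thesis using cert(1) that eliminated[of "\<lambda>i. A i j"] by (simp add: split)
  qed
  moreover have "(\<Sum>i\<in>U. y' i * b i) = 1"
    using cert(2) eliminated[of b] by (simp add: split)
  ultimately show ?thesis by blast
qed

text \<open>The Fredholm alternative, by Gaussian elimination on the last column.\<close>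

lemma linear_system_solvable_or_certificate:
  fixes A :: "'i \<Rightarrow> nat \<Rightarrow> 'a::field" and b :: "'i \<Rightarrow> 'a"
  assumes "finite U"
  shows "(\<exists>d. \<forall>i\<in>U. (\<Sum>j<l. A i j * d j) = b i) \<or>
         (\<exists>y. (\<forall>j<l. (\<Sum>i\<in>U. y i * A i j) = 0) \<and> (\<Sum>i\<in>U. y i * b i) = 1)"
  using assms
proof (induction l arbitrary: A b U)
  case 0
  show ?case
  proof (cases "\<forall>i\<in>U. b i = 0")
    case False
    then obtain p where "p \<in> U" "b p \<noteq> 0" by auto
    have "(\<Sum>i\<in>U. (if i = p then 1 / b p else 0) * b i) = (\<Sum>i\<in>U. if i = p then 1 / b p * b i else 0)"
      by (rule sum.cong) auto
    then have "(\<Sum>i\<in>U. (if i = p then 1 / b p else 0) * b i) = 1"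
      using 0 \<open>p \<in> U\<close> \<open>b p \<noteq> 0\<close> by simp
    then show ?thesis by (intro disjI2 exI[of _ "\<lambda>i. if i = p then 1 / b p else 0"]) simp
  qed simp
next
  case (Suc l)
  show ?case
  proof (cases "\<exists>p\<in>U. A p l \<noteq> 0")
    case False
    then show ?thesis using Suc.IH[OF Suc.prems, of A b] by (auto simp: less_Suc_eq)
  next
    case True
    then obtain p where pivot: "p \<in> U" "A p l \<noteq> 0" by blast
    have "finite (U - {p})" using Suc.prems by simp
    from Suc.IH[OF this, of "\<lambda>i j. A i j - A i l / A p l * A p j" "\<lambda>i. b i - A i l / A p l * b p"]
    show ?thesis
    proof (elim disjE exE)
      fix d
      assume "\<forall>i\<in>U - {p}. (\<Sum>j<l. (A i j - A i l / A p l * A p j) * d j) = b i - A i l / A p l * b p"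
      then show ?thesis using solution_after_pivot_elimination[of p U A l d b] pivot by blast
    next
      fix y
      assume "(\<forall>j<l. (\<Sum>i\<in>U - {p}. y i * (A i j - A i l / A p l * A p j)) = 0) \<and>
              (\<Sum>i\<in>U - {p}. y i * (b i - A i l / A p l * b p)) = 1"
      then show ?thesis
        using certificate_after_pivot_elimination[of U p A l y b] Suc.prems pivot by blast
    qed
  qed
qed

lemma UNIV_bit: "(UNIV :: bit set) = {0, 1}"
  using bit.exhaust by auto

lemma UNIV_bit_option: "(UNIV :: bit option set) = {None, Some 0, Some 1}"
  by (simp add: UNIV_option_conv UNIV_bit)

lemma bvecs_eq_padded_funs: "bvecs n = padded_funs n (\<lambda>_. UNIV) 0"
  by (auto simp: bvecs_def padded_funs_def)

lemma defect_configs_eq_padded_funs: "defect_configs n = padded_funs n (\<lambda>_. UNIV) None"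
  by (auto simp: defect_configs_def padded_funs_def)

lemma finite_bvecs: "finite (bvecs n)"
  unfolding bvecs_eq_padded_funs by (rule finite_padded_funs) (simp add: UNIV_bit)

lemma finite_defect_configs: "finite (defect_configs n)"
  unfolding defect_configs_eq_padded_funs by (rule finite_padded_funs) (simp add: UNIV_bit_option)

lemma finite_dual_code: "finite (dual_code G0 n l)"
  by (rule finite_subset[OF _ finite_bvecs]) (auto simp: dual_code_def)

lemma hweight_le: "hweight n y \<le> n"
  using card_mono[of "{..<n}" "{i. i < n \<and> y i \<noteq> 0}"] by (auto simp: hweight_def)

lemma min_dist_le_hweight:
  assumes "y \<in> dual_code G0 n l" "y \<noteq> (\<lambda>_. 0)"
  shows "min_dist G0 n l \<le> hweight n y"
proof -
  have "finite {hweight n x | x. x \<in> dual_code G0 n l \<and> x \<noteq> (\<lambda>_. 0)}"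
    using finite_dual_code by (simp add: finite_image_set)
  then show ?thesis using assms unfolding min_dist_def by (auto intro!: Min_le)
qed

lemma dual_codeword_of_encoding_failure:
  assumes "\<not> encodable G0 G1 n l k m c"
  obtains y where "y \<in> dual_code G0 n l" "y \<noteq> (\<lambda>_. 0)" "\<forall>i<n. y i \<noteq> 0 \<longrightarrow> c i \<noteq> None"
proof -
  define U where "U = {i \<in> {..<n}. c i \<noteq> None}"
  define b where "b i = mat_vec G1 k m i + the (c i)" for i
  have "finite U" by (simp add: U_def)
  from linear_system_solvable_or_certificate[OF this, where A = G0 and b = b and l = l] show thesis
  proof (elim disjE exE conjE)
    fix d assume d: "\<forall>i\<in>U. (\<Sum>j<l. G0 i j * d j) = b i"
    define d' where "d' j = (if j < l then d j else 0)" for j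
    have "d' \<in> bvecs l" by (simp add: d'_def bvecs_def)
    moreover have "mat_vec G0 l d' i = mat_vec G1 k m i + s" if "i < n" "c i = Some s" for i s
    proof -
      have "mat_vec G0 l d' i = (\<Sum>j<l. G0 i j * d j)"
        unfolding mat_vec_def d'_def by (rule sum.cong) auto
      then show ?thesis using d that by (simp add: U_def b_def)
    qed
    ultimately have "encodable G0 G1 n l k m c" unfolding encodable_def by blast
    with assms show thesis by contradiction
  next
    fix y assume y_orth: "\<forall>j<l. (\<Sum>i\<in>U. y i * G0 i j) = 0" and y_b: "(\<Sum>i\<in>U. y i * b i) = 1"
    define y' where "y' i = (if i \<in> U then y i else 0)" for i
    have restrict_to_U: "(\<Sum>i<n. G0 i j * y' i) = (\<Sum>i\<in>U. y i * G0 i j)" for j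
    proof -
      have "(\<Sum>i<n. G0 i j * y' i) = (\<Sum>i<n. if c i \<noteq> None then y i * G0 i j else 0)"
        by (rule sum.cong) (auto simp: y'_def U_def)
      then show ?thesis unfolding U_def by (simp only: sum.inter_filter[OF finite_lessThan])
    qed
    have "y' \<in> bvecs n" by (simp add: bvecs_def y'_def U_def)
    with y_orth have "y' \<in> dual_code G0 n l"
      unfolding dual_code_def mem_Collect_eq restrict_to_U by blast
    moreover have "y' \<noteq> (\<lambda>_. 0)"
    proof
      assume "y' = (\<lambda>_. 0)"
      then have "\<forall>i\<in>U. y i = 0" by (simp add: y'_def fun_eq_iff) meson
      with y_b show False by simp
    qed
    moreover have "\<forall>i<n. y' i \<noteq> 0 \<longrightarrow> c i \<noteq> None" by (simp add: y'_def U_def)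
    ultimately show thesis by (rule that)
  qed
qed

lemma prob_defects_cover_support:
  "(\<Sum>c\<in>{c \<in> defect_configs n. \<forall>i<n. y i \<noteq> 0 \<longrightarrow> c i \<noteq> None}. config_prob \<beta> n c)
     = \<beta> ^ hweight n y"
proof -
  define S where "S i = (if y i = 0 then UNIV else {Some 0, Some (1::bit)})" for i
  define f where "f a = (case a of None \<Rightarrow> 1 - \<beta> | Some _ \<Rightarrow> \<beta> / 2)" for a :: "bit option"
  have "a \<in> S i \<longleftrightarrow> (y i \<noteq> 0 \<longrightarrow> a \<noteq> None)" for a i
    by (cases a) (auto simp: S_def)
  then have configs: "{c \<in> defect_configs n. \<forall>i<n. y i \<noteq> 0 \<longrightarrow> c i \<noteq> None} = padded_funs n S None"
    unfolding defect_configs_def padded_funs_def by blast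
  have cell: "(\<Sum>a\<in>S i. f a) = (if y i \<noteq> 0 then \<beta> else 1)" for i
    by (simp add: S_def f_def UNIV_bit_option)
  have "(\<Sum>c\<in>padded_funs n S None. config_prob \<beta> n c) = (\<Sum>c\<in>padded_funs n S None. \<Prod>i<n. f (c i))"
    by (simp add: config_prob_def f_def)
  also have "\<dots> = (\<Prod>i<n. \<Sum>a\<in>S i. f a)"
    by (rule sum_prod_padded_funs) (simp add: S_def UNIV_bit_option)
  also have "\<dots> = (\<Prod>i<n. if y i \<noteq> 0 then \<beta> else 1)"
    by (simp only: cell)
  also have "\<dots> = (\<Prod>i\<in>{i. i < n \<and> y i \<noteq> 0}. \<beta>)"
    by (simp add: prod.If_cases Int_def conj_commute)
  finally show ?thesis unfolding configs hweight_def by simp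
qed

lemma sum_le_sum_of_cover:
  fixes p :: "'c \<Rightarrow> 'a::ordered_comm_monoid_add"
  assumes "finite C" "finite Y" "F \<subseteq> C" "\<And>c. c \<in> C \<Longrightarrow> 0 \<le> p c"
    and cover: "\<And>c. c \<in> F \<Longrightarrow> \<exists>y\<in>Y. Q y c"
  shows "sum p F \<le> (\<Sum>y\<in>Y. sum p {c \<in> C. Q y c})"
proof -
  have "sum p F \<le> (\<Sum>c\<in>F. \<Sum>y\<in>Y. if Q y c then p c else 0)"
  proof (rule sum_mono)
    fix c assume "c \<in> F"
    with cover obtain y where "y \<in> Y" "Q y c" by blast
    then have "(if Q y c then p c else 0) \<le> (\<Sum>y\<in>Y. if Q y c then p c else 0)"
      using assms \<open>c \<in> F\<close> by (intro sum_nonneg_leq_bound[OF \<open>finite Y\<close> _ refl]) auto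
    with \<open>Q y c\<close> show "p c \<le> (\<Sum>y\<in>Y. if Q y c then p c else 0)" by simp
  qed
  also have "\<dots> \<le> (\<Sum>c\<in>C. \<Sum>y\<in>Y. if Q y c then p c else 0)"
    using assms by (intro sum_mono2) (auto intro: sum_nonneg)
  also have "\<dots> = (\<Sum>y\<in>Y. sum p {c \<in> C. Q y c})"
    using assms by (simp add: sum.swap[of _ C] sum.inter_filter)
  finally show ?thesis .
qed

lemma fail_prob_le_sum_dual_code:
  assumes "0 \<le> \<beta>" "\<beta> \<le> 1"
  shows "fail_prob \<beta> G0 G1 n l k m \<le> (\<Sum>y\<in>dual_code G0 n l - {\<lambda>_. 0}. \<beta> ^ hweight n y)"
proof -
  have "fail_prob \<beta> G0 G1 n l k m
          \<le> (\<Sum>y\<in>dual_code G0 n l - {\<lambda>_. 0}.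
               \<Sum>c\<in>{c \<in> defect_configs n. \<forall>i<n. y i \<noteq> 0 \<longrightarrow> c i \<noteq> None}. config_prob \<beta> n c)"
    unfolding fail_prob_def
  proof (rule sum_le_sum_of_cover)
    show "0 \<le> config_prob \<beta> n c" for c
      using assms unfolding config_prob_def by (intro prod_nonneg) (auto split: option.split)
    show "\<exists>y\<in>dual_code G0 n l - {\<lambda>_. 0}. \<forall>i<n. y i \<noteq> 0 \<longrightarrow> c i \<noteq> None"
      if "c \<in> {c \<in> defect_configs n. \<not> encodable G0 G1 n l k m c}" for c
      using that dual_codeword_of_encoding_failure[of G0 G1 n l k m c] by blast
  qed (auto simp: finite_defect_configs finite_dual_code)
  then show ?thesis by (simp only: prob_defects_cover_support)
qed

lemma sum_dual_code_weights_le: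
  fixes a \<beta> :: real
  assumes "0 \<le> \<beta>" "0 \<le> a"
    and weights: "\<forall>w. min_dist G0 n l \<le> w \<and> w \<le> n \<longrightarrow> real (weight_enum G0 n l w) \<le> a * real (n choose w)"
  shows "(\<Sum>y\<in>dual_code G0 n l - {\<lambda>_. 0}. \<beta> ^ hweight n y) \<le> a * (1 + \<beta>) ^ n"
proof -
  define D where "D = dual_code G0 n l - {\<lambda>_. 0}"
  have "(\<Sum>y\<in>D. \<beta> ^ hweight n y) = (\<Sum>w\<le>n. real (card {y \<in> D. hweight n y = w}) * \<beta> ^ w)"
    by (rule sum_fun_comp) (auto simp: D_def finite_dual_code hweight_le)
  also have "\<dots> \<le> (\<Sum>w\<le>n. a * real (n choose w) * \<beta> ^ w)"
  proof (rule sum_mono)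
    fix w assume w: "w \<in> {..n}"
    have "real (card {y \<in> D. hweight n y = w}) \<le> a * real (n choose w)"
    proof (cases "{y \<in> D. hweight n y = w} = {}")
      case False
      then obtain y where "y \<in> D" "hweight n y = w" by blast
      then have "min_dist G0 n l \<le> w" by (auto simp: D_def intro: min_dist_le_hweight)
      moreover have "card {y \<in> D. hweight n y = w} \<le> weight_enum G0 n l w"
        unfolding weight_enum_def D_def by (rule card_mono) (auto simp: finite_dual_code)
      ultimately show ?thesis using weights w by (meson atMost_iff of_nat_le_iff order_trans)
    qed (use \<open>0 \<le> a\<close> in \<open>simp only: card.empty, simp\<close>)
    then show "real (card {y \<in> D. hweight n y = w}) * \<beta> ^ w \<le> a * real (n choose w) * \<beta> ^ w"
      using \<open>0 \<le> \<beta>\<close> by (intro mult_right_mono) auto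
  qed
  also have "\<dots> = a * (\<beta> + 1) ^ n"
    by (simp add: binomial_ring sum_distrib_left mult.assoc)
  finally show ?thesis by (simp add: D_def add.commute)
qed

theorem corollary2:
  fixes \<beta> :: real and G0 G1 :: "nat \<Rightarrow> nat \<Rightarrow> bit" and m :: "nat \<Rightarrow> bit"
    and n l k :: nat
  assumes "0 < \<beta>" and "\<beta> < 1"
    and "m \<in> bvecs k"
    and "\<forall>w. min_dist G0 n l \<le> w \<and> w \<le> n \<longrightarrow>
           real (weight_enum G0 n l w) \<le> (1/2) ^ l * real (n choose w)"
  shows "fail_prob \<beta> G0 G1 n l k m \<le> (1/2) ^ l * (1 + \<beta>) ^ n"
proof -
  have "fail_prob \<beta> G0 G1 n l k m \<le> (\<Sum>y\<in>dual_code G0 n l - {\<lambda>_. 0}. \<beta> ^ hweight n y)"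
    using assms(1,2) by (intro fail_prob_le_sum_dual_code) auto
  also have "\<dots> \<le> (1/2) ^ l * (1 + \<beta>) ^ n"
    using assms(1,4) by (intro sum_dual_code_weights_le) simp_all
  finally show ?thesis .
qed

end
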